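(* Let $N\ge1$, $h=\frac{2\pi}{2N+1}$, $x_\nu=\nu h$ ($\nu=0,\dots,2N$), and let $u_N(x,t)=\sum_{|k|\le N}\widehat u_k(t)e^{ikx}$ solve the $2/3$ de-aliasing pseudo-spectral Fourier method for Burgers' equation, $$\partial_t u_N(x,t)+\tfrac12\partial_x\Big(I_N\big[(\mathcal S u_N)^2\big]\Big)(x,t)=0,\qquad x\in[0,2\pi),$$ where $\mathcal S u_N:=\sum_{|k|\le \frac23 N}\sigma_k\widehat u_k(t)e^{ikx}$. Then the smoothed solution $u_m:=\mathcal S u_N$ (a trigonometric polynomial of degree $m:=\frac23N$) satisfies $$\partial_t u_m(x,t)+\tfrac12\partial_x\,\mathcal S[u_m^2](x,t)=0,$$ where for a $2\pi$-periodic $w$, $\mathcal S w=\sum_{|k|\le m}\sigma_k\widehat w_k e^{ikx}$.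
   Context: $I_N[w]$ denotes the trigonometric interpolant of degree $N$ of a $2\pi$-periodic function $w$ at the $2N+1$ equispaced points $x_\nu$: $I_N[w](x)=\sum_{|k|\le N}\widetilde w(k)e^{ikx}$ with $\widetilde w(k)=\frac{h}{2\pi}\sum_{\nu=0}^{2N}w(x_\nu)e^{-ikx_\nu}$. The smoothing factors satisfy $\sigma_k\in[0,1]$, $\sigma_k=1$ for $|k|\le N/3$, and $\sigma_k=0$ for $|k|>\frac23N$ (e.g. $\sigma_k=\sigma(|k|/N)$ with a smooth mollifier $\sigma\equiv1$ on $[0,\frac13]$, $\sigma\in(0,1)$ on $(\frac13,\frac23)$, $\sigma\equiv0$ on $[\frac23,1]$). $\widehat w_k$ denotes the $k$-th Fourier coefficient. *)

theory Defs
  imports "HOL-Analysis.Analysis"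
begin

definition trig_poly :: "nat \<Rightarrow> (int \<Rightarrow> complex) \<Rightarrow> real \<Rightarrow> complex" where
  "trig_poly N c x = (\<Sum>k\<in>{-int N..int N}. c k * exp (\<i> * of_int k * of_real x))"

definition mesh :: "nat \<Rightarrow> real" where
  "mesh N = 2 * pi / (2 * real N + 1)"

definition gridpt :: "nat \<Rightarrow> nat \<Rightarrow> real" where
  "gridpt N \<nu> = real \<nu> * mesh N"

definition interp_coeff :: "nat \<Rightarrow> (real \<Rightarrow> complex) \<Rightarrow> int \<Rightarrow> complex" where
  "interp_coeff N w k = of_real (mesh N / (2 * pi)) *
     (\<Sum>\<nu>\<in>{0..2*N}. w (gridpt N \<nu>) * exp (- \<i> * of_int k * of_real (gridpt N \<nu>)))"

definition interp :: "nat \<Rightarrow> (real \<Rightarrow> complex) \<Rightarrow> real \<Rightarrow> complex" where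
  "interp N w = trig_poly N (interp_coeff N w)"

definition fourier_coeff :: "(real \<Rightarrow> complex) \<Rightarrow> int \<Rightarrow> complex" where
  "fourier_coeff w k = of_real (1 / (2 * pi)) *
     integral {0..2*pi} (\<lambda>x. w x * exp (- \<i> * of_int k * of_real x))"

definition smoothing_factors :: "nat \<Rightarrow> (int \<Rightarrow> real) \<Rightarrow> bool" where
  "smoothing_factors N \<sigma> \<longleftrightarrow>
     (\<forall>k. 0 \<le> \<sigma> k \<and> \<sigma> k \<le> 1) \<and>
     (\<forall>k. real_of_int \<bar>k\<bar> \<le> real N / 3 \<longrightarrow> \<sigma> k = 1) \<and>
     (\<forall>k. real_of_int \<bar>k\<bar> > 2 * real N / 3 \<longrightarrow> \<sigma> k = 0)"

definition smooth_range :: "nat \<Rightarrow> int set" where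
  "smooth_range N = {k. real_of_int \<bar>k\<bar> \<le> 2 * real N / 3}"

definition smooth_coeffs :: "nat \<Rightarrow> (int \<Rightarrow> real) \<Rightarrow> (int \<Rightarrow> complex) \<Rightarrow> real \<Rightarrow> complex" where
  "smooth_coeffs N \<sigma> c x =
     (\<Sum>k\<in>smooth_range N. of_real (\<sigma> k) * c k * exp (\<i> * of_int k * of_real x))"

definition smooth_fun :: "nat \<Rightarrow> (int \<Rightarrow> real) \<Rightarrow> (real \<Rightarrow> complex) \<Rightarrow> real \<Rightarrow> complex" where
  "smooth_fun N \<sigma> w x = smooth_coeffs N \<sigma> (fourier_coeff w) x"

end

theory Submission
  imports Defs
begin

text \<open>Write m = 2N/3. The square of the smoothed solution only has frequencies j + l with
  |j|, |l| \<le> m, so for |k| \<le> m every difference j + l - k has modulus at most 2N < 2N + 1: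
  no frequency aliases onto k, and the discrete coefficients of I_N[(S u_N)^2] coincide there with
  the exact Fourier coefficients of (S u_N)^2. By discrete orthogonality the scheme is equivalent
  to the coefficient equations u_k' + (i k / 2) I_N[(S u_N)^2]_k = 0 for |k| \<le> N; multiplying
  by sigma_k and summing over |k| \<le> m gives the smoothed equation.\<close>

definition exp_mode :: "int \<Rightarrow> real \<Rightarrow> complex" where
  "exp_mode k x = exp (\<i> * of_int k * of_real x)"

lemma exp_mode_mult: "exp_mode a x * exp_mode b x = exp_mode (a + b) x"
  by (simp add: exp_mode_def exp_add[symmetric] algebra_simps)

lemma exp_mode_uminus: "exp (- \<i> * of_int k * of_real x) = exp_mode (- k) x"
  by (simp add: exp_mode_def)

lemma exp_mode_0 [simp]: "exp_mode 0 = (\<lambda>x. 1)"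
  by (simp add: exp_mode_def [abs_def])

lemma exp_mode_at_0 [simp]: "exp_mode k 0 = 1"
  by (simp add: exp_mode_def)

lemma exp_mode_2pi: "exp_mode k (2 * pi) = 1"
proof -
  have "exp_mode k (2 * pi) = exp ((2 * of_int k * pi) * \<i>)"
    by (simp add: exp_mode_def algebra_simps)
  also have "\<dots> = 1" by (rule exp_integer_2pi) simp
  finally show ?thesis .
qed

lemma exp_mode_has_vector_derivative:
  "(exp_mode k has_vector_derivative (\<i> * of_int k * exp_mode k x)) (at x within S)"
proof -
  have "((\<lambda>z. exp (\<i> * of_int k * z)) has_field_derivative
          exp (\<i> * of_int k * of_real x) * (\<i> * of_int k)) (at (of_real x))"
    by (auto intro!: derivative_eq_intros)
  from has_vector_derivative_real_field [OF this] show ?thesis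
    by (simp add: exp_mode_def [abs_def] mult.commute)
qed

lemma has_integral_exp_mode:
  "(exp_mode k has_integral (if k = 0 then of_real (2 * pi) else 0)) {0..2 * pi}"
proof (cases "k = 0")
  case True
  then show ?thesis
    using has_integral_const_real [of "1::complex" 0 "2 * pi"] by (simp add: scaleR_conv_of_real)
next
  case False
  have "((\<lambda>x. exp_mode k x / (\<i> * of_int k)) has_vector_derivative exp_mode k x)
          (at x within {0..2 * pi})" for x
    using has_vector_derivative_divide [OF exp_mode_has_vector_derivative [of k x "{0..2 * pi}"], of "\<i> * of_int k"] False
    by simp
  from fundamental_theorem_of_calculus [OF _ this] False show ?thesis
    by (simp add: exp_mode_2pi)
qed

lemma mesh_mult_points: "real (2 * N + 1) * mesh N = 2 * pi"
  by (simp add: mesh_def add.commute)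

text \<open>Discrete orthogonality: a geometric sum over the 2N + 1 grid points whose ratio exp (i k h)
  is a nontrivial root of unity as long as 2N + 1 does not divide k.\<close>

lemma sum_exp_mode_gridpt:
  assumes "\<bar>k\<bar> \<le> 2 * int N"
  shows "(\<Sum>\<nu>\<in>{0..2 * N}. exp_mode k (gridpt N \<nu>)) = (if k = 0 then of_nat (2 * N + 1) else 0)"
proof (cases "k = 0")
  case True
  then show ?thesis by simp
next
  case False
  define q where "q = exp (\<i> * of_int k * of_real (mesh N))"
  have exp_mode_gridpt: "exp_mode k (gridpt N \<nu>) = q ^ \<nu>" for \<nu>
  proof -
    have "exp_mode k (gridpt N \<nu>) = exp (of_nat \<nu> * (\<i> * of_int k * of_real (mesh N)))"
      by (simp add: exp_mode_def gridpt_def algebra_simps)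
    then show ?thesis by (simp add: exp_of_nat_mult q_def)
  qed
  have q_root: "q ^ (2 * N + 1) = 1"
  proof -
    have "q ^ (2 * N + 1) = exp (of_nat (2 * N + 1) * (\<i> * of_int k * of_real (mesh N)))"
      unfolding q_def by (rule exp_of_nat_mult [symmetric])
    also have "\<dots> = exp_mode k (real (2 * N + 1) * mesh N)"
      unfolding exp_mode_def by (simp only: of_real_mult of_real_of_nat_eq ac_simps)
    also have "\<dots> = 1" by (simp only: mesh_mult_points exp_mode_2pi)
    finally show ?thesis .
  qed
  have q_ne_1: "q \<noteq> 1"
  proof
    assume "q = 1"
    then obtain n :: int where "real_of_int k * mesh N = of_int (2 * n) * pi"
      unfolding q_def exp_eq_1 by auto
    then have "real_of_int k * (2 * pi) = of_int (2 * n) * pi * real (2 * N + 1)"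
      using mesh_mult_points by (metis mult.assoc mult.commute)
    then have "real_of_int k = of_int n * real (2 * N + 1)" by simp
    then have k_eq: "k = n * int (2 * N + 1)" by (metis of_int_eq_iff of_int_mult of_int_of_nat_eq)
    with False have "n \<noteq> 0" by auto
    then have "\<bar>k\<bar> \<ge> int (2 * N + 1)"
      unfolding k_eq abs_mult by (simp add: abs_ge_self mult_le_cancel_right1)
    with assms show False by simp
  qed
  have "(\<Sum>\<nu>\<in>{0..2 * N}. exp_mode k (gridpt N \<nu>)) = (\<Sum>\<nu><2 * N + 1. q ^ \<nu>)"
    by (simp add: exp_mode_gridpt atLeast0AtMost lessThan_Suc_atMost)
  also have "\<dots> = (1 - q ^ (2 * N + 1)) / (1 - q)"
    by (rule trans [OF sum_gp_strict]) (simp add: q_ne_1)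
  also have "\<dots> = 0" by (simp only: q_root) simp
  finally show ?thesis using False by simp
qed

lemma interp_coeff_sum_exp_mode:
  assumes "finite I" and "\<And>i. i \<in> I \<Longrightarrow> \<bar>f i - k\<bar> \<le> 2 * int N"
  shows "interp_coeff N (\<lambda>x. \<Sum>i\<in>I. b i * exp_mode (f i) x) k = (\<Sum>i\<in>I. if f i = k then b i else 0)"
proof -
  have weight: "of_real (mesh N / (2 * pi)) * of_nat (2 * N + 1) = (1::complex)"
  proof -
    have "mesh N / (2 * pi) * real (2 * N + 1) = 1" by (simp add: mesh_def add.commute)
    then show ?thesis by (metis of_real_1 of_real_mult of_real_of_nat_eq)
  qed
  have "interp_coeff N (\<lambda>x. \<Sum>i\<in>I. b i * exp_mode (f i) x) k =
      of_real (mesh N / (2 * pi)) * (\<Sum>\<nu>\<in>{0..2 * N}. \<Sum>i\<in>I. b i * exp_mode (f i - k) (gridpt N \<nu>))"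
    unfolding interp_coeff_def exp_mode_uminus
    by (simp add: sum_distrib_right mult.assoc exp_mode_mult)
  also have "\<dots> = of_real (mesh N / (2 * pi)) *
      (\<Sum>i\<in>I. b i * (\<Sum>\<nu>\<in>{0..2 * N}. exp_mode (f i - k) (gridpt N \<nu>)))"
    by (simp add: sum.swap [of _ "{0..2 * N}"] sum_distrib_left)
  also have "\<dots> = of_real (mesh N / (2 * pi)) *
      (\<Sum>i\<in>I. b i * (if f i = k then of_nat (2 * N + 1) else 0))"
    using assms(2) by (simp add: sum_exp_mode_gridpt)
  also have "\<dots> = (\<Sum>i\<in>I. if f i = k then b i else 0)"
    unfolding sum_distrib_left using weight by (intro sum.cong) (simp_all add: algebra_simps)
  finally show ?thesis .
qed

lemma fourier_coeff_sum_exp_mode: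
  assumes "finite I"
  shows "fourier_coeff (\<lambda>x. \<Sum>i\<in>I. b i * exp_mode (f i) x) k = (\<Sum>i\<in>I. if f i = k then b i else 0)"
proof -
  have "((\<lambda>x. \<Sum>i\<in>I. b i * exp_mode (f i - k) x) has_integral
        (\<Sum>i\<in>I. b i * (if f i - k = 0 then of_real (2 * pi) else 0))) {0..2 * pi}"
    by (rule has_integral_sum [OF assms]) (intro has_integral_mult_right has_integral_exp_mode)
  moreover have "(\<lambda>x. (\<Sum>i\<in>I. b i * exp_mode (f i) x) * exp (- \<i> * of_int k * of_real x)) =
      (\<lambda>x. \<Sum>i\<in>I. b i * exp_mode (f i - k) x)"
    unfolding exp_mode_uminus by (simp add: sum_distrib_right mult.assoc exp_mode_mult)
  ultimately show ?thesis
    unfolding fourier_coeff_def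
    by (simp add: integral_unique sum_distrib_left if_distrib cong: if_cong)
qed

lemma trig_poly_exp_mode: "trig_poly N c = (\<lambda>x. \<Sum>k\<in>{-int N..int N}. c k * exp_mode k x)"
  by (simp add: trig_poly_def [abs_def] exp_mode_def [abs_def])

lemma smooth_coeffs_exp_mode:
  "smooth_coeffs N \<sigma> c = (\<lambda>x. \<Sum>k\<in>smooth_range N. (of_real (\<sigma> k) * c k) * exp_mode k x)"
  by (simp add: smooth_coeffs_def [abs_def] exp_mode_def [abs_def])

lemma interp_coeff_trig_poly:
  assumes "\<bar>k\<bar> \<le> int N"
  shows "interp_coeff N (trig_poly N c) k = c k"
proof -
  have "interp_coeff N (trig_poly N c) k = (\<Sum>j\<in>{-int N..int N}. if j = k then c j else 0)"
    unfolding trig_poly_exp_mode using assms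
    by (intro interp_coeff_sum_exp_mode [where f = "\<lambda>j. j"]) auto
  also have "\<dots> = c k" using assms by (simp add: abs_le_iff)
  finally show ?thesis .
qed

lemma sum_exp_mode_has_vector_derivative:
  "finite K \<Longrightarrow> ((\<lambda>x. \<Sum>k\<in>K. c k * exp_mode k x) has_vector_derivative
     (\<Sum>k\<in>K. c k * (\<i> * of_int k * exp_mode k x))) (at x)"
  by (intro has_vector_derivative_sum has_vector_derivative_mult_right exp_mode_has_vector_derivative)

lemma sum_coeffs_has_vector_derivative:
  assumes "finite K" "\<And>k. ((\<lambda>s. u s k) has_vector_derivative D k) (at t)"
  shows "((\<lambda>s. \<Sum>k\<in>K. a k * u s k * exp_mode k x) has_vector_derivative
           (\<Sum>k\<in>K. a k * D k * exp_mode k x)) (at t)"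
  using assms
  by (intro has_vector_derivative_sum has_vector_derivative_mult_right has_vector_derivative_mult_left) auto

lemma smooth_range_subset: "smooth_range N \<subseteq> {-int N..int N}"
proof
  fix k
  assume "k \<in> smooth_range N"
  then have "real_of_int \<bar>k\<bar> \<le> real N" unfolding smooth_range_def by simp
  then have "\<bar>k\<bar> \<le> int N" by linarith
  then show "k \<in> {-int N..int N}" by auto
qed

lemma finite_smooth_range: "finite (smooth_range N)"
  using smooth_range_subset finite_subset by blast

lemma smooth_range_alias_bound:
  assumes "j \<in> smooth_range N" "l \<in> smooth_range N" "k \<in> smooth_range N"
  shows "\<bar>j + l - k\<bar> \<le> 2 * int N"
proof -
  have "real_of_int \<bar>j + l - k\<bar> \<le> real_of_int \<bar>j\<bar> + real_of_int \<bar>l\<bar> + real_of_int \<bar>k\<bar>"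
    by linarith
  also have "\<dots> \<le> 2 * real N" using assms unfolding smooth_range_def by simp
  finally show ?thesis by linarith
qed

lemma sum_exp_mode_power2:
  "(\<Sum>k\<in>K. a k * exp_mode k x)\<^sup>2 = (\<Sum>p\<in>K \<times> K. (a (fst p) * a (snd p)) * exp_mode (fst p + snd p) x)"
  by (simp add: power2_eq_square sum_product sum.cartesian_product exp_mode_mult [symmetric]
      algebra_simps split_beta)

lemma interp_coeff_smooth_square_eq_fourier_coeff:
  assumes "k \<in> smooth_range N"
  shows "interp_coeff N (\<lambda>x. (smooth_coeffs N \<sigma> c x)\<^sup>2) k = fourier_coeff (\<lambda>x. (smooth_coeffs N \<sigma> c x)\<^sup>2) k"
proof -
  define a where "a j = of_real (\<sigma> j) * c j" for j
  let ?R = "smooth_range N"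
  have square: "(\<lambda>x. (smooth_coeffs N \<sigma> c x)\<^sup>2) =
      (\<lambda>x. \<Sum>p\<in>?R \<times> ?R. (a (fst p) * a (snd p)) * exp_mode (fst p + snd p) x)"
    unfolding smooth_coeffs_exp_mode a_def [symmetric] sum_exp_mode_power2 ..
  have "interp_coeff N (\<lambda>x. (smooth_coeffs N \<sigma> c x)\<^sup>2) k =
      (\<Sum>p\<in>?R \<times> ?R. if fst p + snd p = k then a (fst p) * a (snd p) else 0)"
    unfolding square using assms smooth_range_alias_bound
    by (intro interp_coeff_sum_exp_mode) (auto simp: finite_smooth_range)
  also have "\<dots> = fourier_coeff (\<lambda>x. (smooth_coeffs N \<sigma> c x)\<^sup>2) k"
    unfolding square by (rule fourier_coeff_sum_exp_mode [symmetric]) (simp add: finite_smooth_range)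
  finally show ?thesis .
qed

lemma pseudospectral_coeff_equation:
  assumes deriv: "\<And>k. ((\<lambda>s. u s k) has_vector_derivative D k) (at t)"
    and scheme: "\<And>x. vector_derivative (\<lambda>s. trig_poly N (u s) x) (at t)
                   + 1/2 * vector_derivative (\<lambda>y. interp N w y) (at x) = 0"
    and k: "\<bar>k\<bar> \<le> int N"
  shows "D k + 1/2 * (\<i> * of_int k * interp_coeff N w k) = 0"
proof -
  let ?K = "{-int N..int N}"
  define b where "b j = D j + 1/2 * (\<i> * of_int j * interp_coeff N w j)" for j
  have "vector_derivative (\<lambda>s. trig_poly N (u s) x) (at t) = (\<Sum>j\<in>?K. 1 * D j * exp_mode j x)" for x
    unfolding trig_poly_exp_mode
    by (rule vector_derivative_at) (use sum_coeffs_has_vector_derivative [OF _ deriv, of ?K "\<lambda>_. 1"] in simp)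
  moreover have "vector_derivative (\<lambda>y. interp N w y) (at x) =
      (\<Sum>j\<in>?K. interp_coeff N w j * (\<i> * of_int j * exp_mode j x))" for x
    unfolding interp_def trig_poly_exp_mode
    by (rule vector_derivative_at) (rule sum_exp_mode_has_vector_derivative; simp)
  ultimately have "trig_poly N b x = 0" for x
    using scheme [of x] unfolding trig_poly_exp_mode b_def
    by (simp add: sum.distrib sum_distrib_left algebra_simps)
  then have "interp_coeff N (trig_poly N b) k = 0"
    by (simp add: interp_coeff_def)
  with k show ?thesis
    by (simp add: interp_coeff_trig_poly b_def)
qed

lemma smoothed_equation_from_coeffs:
  assumes deriv: "\<And>k. ((\<lambda>s. u s k) has_vector_derivative D k) (at t)"
    and coeffs: "\<And>k. k \<in> smooth_range N \<Longrightarrow> D k + 1/2 * (\<i> * of_int k * fourier_coeff w k) = 0"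
  shows "vector_derivative (\<lambda>s. smooth_coeffs N \<sigma> (u s) x) (at t)
           + 1/2 * vector_derivative (\<lambda>y. smooth_fun N \<sigma> w y) (at x) = 0"
proof -
  let ?R = "smooth_range N"
  have "vector_derivative (\<lambda>s. smooth_coeffs N \<sigma> (u s) x) (at t) =
      (\<Sum>k\<in>?R. of_real (\<sigma> k) * D k * exp_mode k x)"
    unfolding smooth_coeffs_exp_mode mult.assoc [symmetric]
    by (rule vector_derivative_at) (rule sum_coeffs_has_vector_derivative [OF finite_smooth_range deriv])
  moreover have "vector_derivative (\<lambda>y. smooth_fun N \<sigma> w y) (at x) =
      (\<Sum>k\<in>?R. of_real (\<sigma> k) * fourier_coeff w k * (\<i> * of_int k * exp_mode k x))"
    unfolding smooth_fun_def smooth_coeffs_exp_mode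
    by (rule vector_derivative_at) (rule sum_exp_mode_has_vector_derivative [OF finite_smooth_range])
  moreover have "of_real (\<sigma> k) * D k * exp_mode k x
      + 1/2 * (of_real (\<sigma> k) * fourier_coeff w k * (\<i> * of_int k * exp_mode k x)) = 0"
    if "k \<in> ?R" for k
  proof -
    have "of_real (\<sigma> k) * D k * exp_mode k x
        + 1/2 * (of_real (\<sigma> k) * fourier_coeff w k * (\<i> * of_int k * exp_mode k x)) =
        of_real (\<sigma> k) * exp_mode k x * (D k + 1/2 * (\<i> * of_int k * fourier_coeff w k))"
      by (simp add: algebra_simps)
    then show ?thesis using coeffs [OF that] by simp
  qed
  ultimately show ?thesis
    by (simp add: sum.distrib [symmetric] sum_distrib_left)
qed

theorem corollary3p2:
  fixes N :: nat and \<sigma> :: "int \<Rightarrow> real"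
    and uhat :: "real \<Rightarrow> int \<Rightarrow> complex" and T :: "real set"
  assumes "N \<ge> 1"
    and "smoothing_factors N \<sigma>"
    and "open T"
    and "\<And>k t. t \<in> T \<Longrightarrow> (\<lambda>s. uhat s k) differentiable (at t)"
    and "\<And>x t. t \<in> T \<Longrightarrow>
           vector_derivative (\<lambda>s. trig_poly N (uhat s) x) (at t)
           + 1/2 * vector_derivative
               (\<lambda>y. interp N (\<lambda>z. (smooth_coeffs N \<sigma> (uhat t) z)^2) y) (at x) = 0"
  shows "\<And>x t. t \<in> T \<Longrightarrow>
           vector_derivative (\<lambda>s. smooth_coeffs N \<sigma> (uhat s) x) (at t)
           + 1/2 * vector_derivative
               (\<lambda>y. smooth_fun N \<sigma> (\<lambda>z. (smooth_coeffs N \<sigma> (uhat t) z)^2) y) (at x) = 0"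
proof -
  fix x t
  assume "t \<in> T"
  define w where "w = (\<lambda>z. (smooth_coeffs N \<sigma> (uhat t) z)\<^sup>2)"
  define D where "D k = vector_derivative (\<lambda>s. uhat s k) (at t)" for k
  have deriv: "((\<lambda>s. uhat s k) has_vector_derivative D k) (at t)" for k
    using assms(4) [OF \<open>t \<in> T\<close>] vector_derivative_works unfolding D_def by blast
  have "D k + 1/2 * (\<i> * of_int k * fourier_coeff w k) = 0" if "k \<in> smooth_range N" for k
  proof -
    have "\<bar>k\<bar> \<le> int N" using subsetD [OF smooth_range_subset that] by auto
    from pseudospectral_coeff_equation [OF deriv assms(5) [OF \<open>t \<in> T\<close>] this]
    show ?thesis
      unfolding w_def interp_coeff_smooth_square_eq_fourier_coeff [OF that] .
  qed
  from smoothed_equation_from_coeffs [OF deriv this]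
  show "vector_derivative (\<lambda>s. smooth_coeffs N \<sigma> (uhat s) x) (at t)
        + 1/2 * vector_derivative (\<lambda>y. smooth_fun N \<sigma> w y) (at x) = 0" .
qed

end
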